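(* Let $a$ and $b$ be coprime odd integers and let $\gamma$ be a positive integer such that $2^\gamma\,\|\,(a+b)$. Then: 1) For $\gamma\geq 2$, $OG_{(a,b)}(1)=\bigcup_{i=0}^{\gamma-1}\{d2^i : d\in OG_{(a,b)}(\gamma)\}$, where $OG_{(a,b)}(\gamma)=\{d\in\mathbb{N} : d=1 \text{ or } d \text{ is odd and } 2\,\|\,\operatorname{ord}_p(\tfrac ab) \text{ for every prime } p \text{ dividing } d\}$. 2) $EG_{(a,b)}(1)=\{d\in\mathbb{N} : d=1 \text{ or } d \text{ is odd and there exists } s\geq 2 \text{ such that } 2^s\,\|\,\operatorname{ord}_p(\tfrac ab) \text{ for every prime } p \text{ dividing } d\}$. 3) $OG_{(a,b)}(0)=OG_{(a,b)}(1)\cup\{2d : d\in OG_{(a,b)}(1)\}$. 4) $EG_{(a,b)}(0)=EG_{(a,b)}(1)\cup\{2d : d\in EG_{(a,b)}(1)\}$.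
   Context: For coprime nonzero integers $a,b$ and an integer $\beta\geq0$, $OG_{(a,b)}(\beta)$ (resp. $EG_{(a,b)}(\beta)$) is the set of positive integers $d$ such that $2^\beta d\mid(a^k+b^k)$ for some odd integer $k\geq1$ (resp. some even integer $k\geq 2$). For $n$ coprime to $ab$, $\operatorname{ord}_n(\frac ab)$ is the multiplicative order of $ab^{-1}$ modulo $n$ (conditions on it presuppose it is defined). $2^s\,\|\,m$ means $2^s\mid m$ and $2^{s+1}\nmid m$. *)

theory Defs
  imports "HOL-Number_Theory.Number_Theory"
begin

definition OG :: "int \<Rightarrow> int \<Rightarrow> nat \<Rightarrow> nat set" where
  "OG a b \<beta> = {d. d > 0 \<and> (\<exists>k::nat. odd k \<and> k \<ge> 1 \<and> int (2 ^ \<beta> * d) dvd (a ^ k + b ^ k))}"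

definition EG :: "int \<Rightarrow> int \<Rightarrow> nat \<Rightarrow> nat set" where
  "EG a b \<beta> = {d. d > 0 \<and> (\<exists>k::nat. even k \<and> k \<ge> 2 \<and> int (2 ^ \<beta> * d) dvd (a ^ k + b ^ k))}"

text \<open>Multiplicative order of a b^{-1} modulo n (meaningful when n is coprime to a b):
  the least positive k with (a b^{-1})^k = 1 mod n, i.e. a^k = b^k mod n.\<close>
definition ord_frac :: "nat \<Rightarrow> int \<Rightarrow> int \<Rightarrow> nat" where
  "ord_frac n a b = (LEAST k. k > 0 \<and> [a ^ k = b ^ k] (mod int n))"

definition exact_pow2_dvd :: "nat \<Rightarrow> 'a::comm_semiring_1 \<Rightarrow> bool" where
  "exact_pow2_dvd s m \<longleftrightarrow> 2 ^ s dvd m \<and> \<not> 2 ^ (s + 1) dvd m"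

end

theory Submission
  imports Defs
begin

text \<open>For odd \<open>k\<close> we have \<open>a ^ k + b ^ k = (a + b) * Q\<close> with \<open>Q\<close> odd, so \<open>2 ^ \<gamma>\<close> divides
  \<open>a ^ k + b ^ k\<close> exactly; for even \<open>k\<close>, \<open>a ^ k + b ^ k = 2 (mod 4)\<close>. This pins down the admissible
  powers of \<open>2\<close>, and only the odd part \<open>d\<close> of a divisor remains. An odd prime \<open>p\<close> not dividing
  \<open>a * b\<close> divides \<open>a ^ k + b ^ k\<close> iff \<open>ord_p(a/b)\<close> divides \<open>2 * k\<close> but not \<open>k\<close>, i.e. iff the
  \<open>2\<close>-adic valuation of \<open>ord_p(a/b)\<close> exceeds that of \<open>k\<close> by one. Conversely, if every prime factor
  of an odd \<open>d\<close> divides some \<open>a ^ (2 ^ t * u) + b ^ (2 ^ t * u)\<close> with \<open>u\<close> odd, then so does \<open>d\<close>: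
  multiplying the exponent by an odd number preserves divisibility, and raising to the \<open>p\<close>-th
  power gains a factor \<open>p\<close> (lifting the exponent), which takes care of repeated prime factors.\<close>

lemma ord_frac_least:
  fixes n :: nat and a b :: int
  assumes "n > 1" and "coprime (int n) a" and "coprime (int n) b"
  shows "ord_frac n a b > 0 \<and> [a ^ ord_frac n a b = b ^ ord_frac n a b] (mod int n)"
proof -
  have "residues (int n)"
    using assms(1) by (simp add: residues_def)
  then have "[a ^ totient n = 1] (mod int n)" and "[b ^ totient n = 1] (mod int n)"
    using residues.euler_theorem[of "int n"] assms(2,3) by (simp_all add: ac_simps)
  then have "[a ^ totient n = b ^ totient n] (mod int n)"
    by (meson cong_sym cong_trans)
  moreover have "totient n > 0"
    using assms(1) by simp
  ultimately have "totient n > 0 \<and> [a ^ totient n = b ^ totient n] (mod int n)"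
    by simp
  then show ?thesis
    unfolding ord_frac_def by (rule LeastI)
qed

lemma cong_pow_iff_ord_frac_dvd:
  fixes n k :: nat and a b :: int
  assumes "n > 1" and "coprime (int n) a" and "coprime (int n) b"
  shows "[a ^ k = b ^ k] (mod int n) \<longleftrightarrow> ord_frac n a b dvd k"
proof -
  define m where "m = ord_frac n a b"
  have m: "m > 0" "[a ^ m = b ^ m] (mod int n)"
    using ord_frac_least[OF assms] by (simp_all add: m_def)
  have reduce: "[a ^ (m * q + r) = b ^ (m * q + r)] (mod int n) \<longleftrightarrow> [a ^ r = b ^ r] (mod int n)"
    for q r
  proof -
    have "[a ^ (m * q + r) = (b ^ m) ^ q * a ^ r] (mod int n)"
      unfolding power_add power_mult by (intro cong_mult[OF cong_pow[OF m(2)] cong_refl])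
    moreover have "b ^ (m * q + r) = (b ^ m) ^ q * b ^ r"
      by (simp add: power_add power_mult)
    ultimately have "[a ^ (m * q + r) = b ^ (m * q + r)] (mod int n) \<longleftrightarrow>
        [(b ^ m) ^ q * a ^ r = (b ^ m) ^ q * b ^ r] (mod int n)"
      unfolding cong_def by simp
    also have "\<dots> \<longleftrightarrow> [a ^ r = b ^ r] (mod int n)"
      using assms(3) by (intro cong_mult_lcancel) (simp add: ac_simps)
    finally show ?thesis .
  qed
  have "[a ^ k = b ^ k] (mod int n) \<longleftrightarrow> [a ^ (k mod m) = b ^ (k mod m)] (mod int n)"
    using reduce[of "k div m" "k mod m"] by simp
  also have "\<dots> \<longleftrightarrow> k mod m = 0"
  proof
    assume "[a ^ (k mod m) = b ^ (k mod m)] (mod int n)"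
    moreover have "k mod m < ord_frac n a b"
      using m(1) by (simp add: m_def)
    ultimately show "k mod m = 0"
      using not_less_Least[of "k mod m" "\<lambda>j. j > 0 \<and> [a ^ j = b ^ j] (mod int n)",
          folded ord_frac_def]
      by auto
  qed simp
  finally show ?thesis
    by (simp add: m_def mod_eq_0_iff_dvd)
qed

lemma sum_odd_power_eq:
  fixes u v :: "'a::comm_ring_1"
  assumes "odd n"
  shows "u ^ n + v ^ n = (u + v) * (\<Sum>i<n. (- v) ^ (n - Suc i) * u ^ i)"
  using power_diff_sumr2[of u n "- v"] assms by simp

lemma dvd_sum_odd_power:
  fixes u v :: "'a::comm_ring_1"
  assumes "odd n"
  shows "u + v dvd u ^ n + v ^ n"
  unfolding sum_odd_power_eq[OF assms] by simp

lemma odd_sum_odd_power_cofactor: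
  fixes u v :: int
  assumes "odd u" and "odd v" and "odd n"
  shows "odd (\<Sum>i<n. (- v) ^ (n - Suc i) * u ^ i)"
proof -
  have "{i \<in> {..<n}. odd ((- v) ^ (n - Suc i) * u ^ i)} = {..<n}"
    using assms(1,2) by auto
  then show ?thesis
    using assms(3) by (simp add: even_sum_iff)
qed

text \<open>Lifting the exponent: each summand of the cofactor is congruent to \<open>u ^ (n - 1)\<close>
  modulo \<open>n\<close>, so \<open>n\<close> divides the cofactor.\<close>
lemma mult_dvd_sum_odd_power:
  fixes u v :: int
  assumes "odd n" and "int n dvd u + v"
  shows "(u + v) * int n dvd u ^ n + v ^ n"
proof -
  have "[u = - v] (mod int n)"
    using assms(2) by (simp add: cong_iff_dvd_diff)
  then have uv: "[- v = u] (mod int n)"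
    by (rule cong_sym)
  have "[(\<Sum>i<n. (- v) ^ (n - Suc i) * u ^ i) = (\<Sum>i<n. u ^ (n - Suc i) * u ^ i)] (mod int n)"
    by (intro cong_sum cong_mult[OF cong_pow[OF uv] cong_refl])
  also have "(\<Sum>i<n. u ^ (n - Suc i) * u ^ i) = int n * u ^ (n - 1)"
    by (simp add: power_add[symmetric])
  finally have "int n dvd (\<Sum>i<n. (- v) ^ (n - Suc i) * u ^ i)"
    by (simp add: cong_dvd_iff)
  then show ?thesis
    unfolding sum_odd_power_eq[OF assms(1)] by (rule mult_dvd_mono[OF dvd_refl])
qed

lemma exact_pow2_dvd_sum_odd_power:
  fixes a b :: int
  assumes "odd a" and "odd b" and "odd k" and "exact_pow2_dvd \<gamma> (a + b)"
  shows "exact_pow2_dvd \<gamma> (a ^ k + b ^ k)"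
proof -
  define Q where "Q = (\<Sum>i<k. (- b) ^ (k - Suc i) * a ^ i)"
  have "coprime ((2::int) ^ (\<gamma> + 1)) Q"
    using odd_sum_odd_power_cofactor[OF assms(1-3)] by (simp add: Q_def)
  then show ?thesis
    using assms(4) unfolding sum_odd_power_eq[OF assms(3)] Q_def[symmetric] exact_pow2_dvd_def
    by (simp add: coprime_dvd_mult_left_iff)
qed

lemma exact_pow2_dvd_sum_even_power:
  fixes a b :: int
  assumes "odd a" and "odd b" and "even k"
  shows "exact_pow2_dvd 1 (a ^ k + b ^ k)"
proof -
  obtain j where k: "k = 2 * j"
    using assms(3) by blast
  obtain x y where "a ^ j = 2 * x + 1" and "b ^ j = 2 * y + 1"
    using assms(1,2) by (meson even_power oddE)
  then have "a ^ k + b ^ k = 2 * (2 * (x\<^sup>2 + x + y\<^sup>2 + y) + 1)"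
    unfolding k power_mult by (simp add: power2_eq_square algebra_simps)
  then obtain z where "a ^ k + b ^ k = 2 * (2 * z + 1)"
    by blast
  then show ?thesis
    unfolding exact_pow2_dvd_def by simp presburger
qed

lemma coprime_of_prime_dvd_sum_power:
  fixes a b p :: int
  assumes "coprime a b" and "prime p" and "p dvd a ^ k + b ^ k" and "k > 0"
  shows "coprime p (a * b)"
proof -
  have not_dvd: "\<not> p dvd x" if "coprime x y" and "p dvd x ^ k + y ^ k" for x y
  proof
    assume "p dvd x"
    then have "p dvd y ^ k"
      using that(2) assms(2,4) by (simp add: prime_dvd_power_iff dvd_add_right_iff)
    then have "p dvd y"
      using assms(2,4) by (simp add: prime_dvd_power_iff)
    with \<open>p dvd x\<close> have "is_unit p"
      using that(1) by (rule coprime_common_divisor[rotated])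
    with assms(2) show False
      by (simp add: not_prime_unit)
  qed
  have "\<not> p dvd a" and "\<not> p dvd b"
    using not_dvd[of a b] not_dvd[of b a] assms(1,3) by (simp_all add: ac_simps)
  then show ?thesis
    using assms(2) by (simp add: prime_imp_coprime prime_dvd_mult_iff)
qed

text \<open>For \<open>p\<close> odd, \<open>p\<close> cannot divide both \<open>a ^ k - b ^ k\<close> and \<open>a ^ k + b ^ k\<close>, while it
  divides their product \<open>a ^ (2 * k) - b ^ (2 * k)\<close> exactly when \<open>ord_frac p a b\<close> divides \<open>2 * k\<close>.\<close>
lemma prime_dvd_sum_power_iff_ord_frac:
  fixes p k :: nat and a b :: int
  assumes "prime p" and "odd p" and "coprime (int p) (a * b)"
  shows "int p dvd a ^ k + b ^ k \<longleftrightarrow> ord_frac p a b dvd 2 * k \<and> \<not> ord_frac p a b dvd k"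
proof -
  have p: "prime (int p)" "p > 1"
    using assms(1) prime_gt_1_nat by auto
  have "coprime (int p) a" and "coprime (int p) b"
    using assms(3) by simp_all
  have ord_dvd_iff: "ord_frac p a b dvd j \<longleftrightarrow> int p dvd a ^ j - b ^ j" for j
    using cong_pow_iff_ord_frac_dvd[OF p(2) \<open>coprime (int p) a\<close> \<open>coprime (int p) b\<close>]
    by (simp add: cong_iff_dvd_diff)
  have "a ^ (2 * k) - b ^ (2 * k) = (a ^ k - b ^ k) * (a ^ k + b ^ k)"
    unfolding mult.commute[of 2 k] power_mult by (simp add: power2_eq_square algebra_simps)
  then have "ord_frac p a b dvd 2 * k \<longleftrightarrow> int p dvd a ^ k - b ^ k \<or> int p dvd a ^ k + b ^ k"
    unfolding ord_dvd_iff using p(1) by (simp add: prime_dvd_mult_iff)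
  moreover have "\<not> (int p dvd a ^ k - b ^ k \<and> int p dvd a ^ k + b ^ k)"
  proof
    assume "int p dvd a ^ k - b ^ k \<and> int p dvd a ^ k + b ^ k"
    then have "int p dvd (a ^ k + b ^ k) - (a ^ k - b ^ k)"
      by (blast intro: dvd_diff)
    then have "int p dvd 2 * b ^ k"
      by simp
    moreover have "coprime (int p) (2 * b ^ k)"
      using assms(2) \<open>coprime (int p) b\<close> by simp
    ultimately have "is_unit (int p)"
      using coprime_common_divisor dvd_refl by blast
    with p(1) show False
      by (simp add: not_prime_unit)
  qed
  ultimately show ?thesis
    unfolding ord_dvd_iff by blast
qed

lemma exact_pow2_dvd_iff_dvd_double:
  fixes m t :: nat
  shows "exact_pow2_dvd (t + 1) m \<longleftrightarrow> (\<exists>u. odd u \<and> m dvd 2 * (2 ^ t * u) \<and> \<not> m dvd 2 ^ t * u)"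
proof
  assume "exact_pow2_dvd (t + 1) m"
  then obtain u where m: "m = 2 ^ (t + 1) * u" and "\<not> 2 ^ (t + 2) dvd m"
    unfolding exact_pow2_dvd_def by auto
  then have "odd u"
    by auto
  moreover have "\<not> m dvd 2 ^ t * u"
    using \<open>odd u\<close> m by (auto dest!: dvd_imp_le simp: odd_pos)
  ultimately show "\<exists>u. odd u \<and> m dvd 2 * (2 ^ t * u) \<and> \<not> m dvd 2 ^ t * u"
    using m by auto
next
  assume "\<exists>u. odd u \<and> m dvd 2 * (2 ^ t * u) \<and> \<not> m dvd 2 ^ t * u"
  then obtain u where "odd u" and "m dvd 2 * (2 ^ t * u)" and m_ndvd: "\<not> m dvd 2 ^ t * u"
    by blast
  then have m_dvd: "m dvd 2 ^ (t + 1) * u"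
    by (simp add: mult.assoc)
  then have "m > 0"
    using \<open>odd u\<close> by (cases m) auto
  obtain j v where v: "odd v" and mjv: "m = v * 2 ^ j"
    using prime_power_canonical[OF two_is_prime_nat \<open>m > 0\<close>] by auto
  have "v dvd 2 ^ (t + 1) * u"
    using m_dvd unfolding mjv by (rule dvd_mult_left)
  moreover have "coprime v (2 ^ (t + 1))"
    using v by simp
  ultimately have "v dvd u"
    by (simp add: coprime_dvd_mult_right_iff)
  have "t + 1 \<le> j"
  proof (rule ccontr)
    assume "\<not> t + 1 \<le> j"
    then have "m dvd 2 ^ t * u"
      unfolding mjv using \<open>v dvd u\<close> by (simp add: mult_dvd_mono le_imp_power_dvd mult.commute)
    with m_ndvd show False ..
  qed
  then have "2 ^ (t + 1) dvd m"
    unfolding mjv by (rule dvd_mult[OF le_imp_power_dvd])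
  moreover have "\<not> 2 ^ (t + 1 + 1) dvd m"
  proof
    assume "2 ^ (t + 1 + 1) dvd m"
    then have "2 ^ (t + 1) * 2 dvd 2 ^ (t + 1) * u"
      using m_dvd by (simp add: dvd_trans)
    with \<open>odd u\<close> show False
      by simp
  qed
  ultimately show "exact_pow2_dvd (t + 1) m"
    unfolding exact_pow2_dvd_def ..
qed

lemma prime_dvd_sum_power_iff_exact_pow2_dvd_ord_frac:
  fixes p t :: nat and a b :: int
  assumes "prime p" and "odd p" and "coprime (int p) (a * b)"
  shows "(\<exists>u. odd u \<and> int p dvd a ^ (2 ^ t * u) + b ^ (2 ^ t * u)) \<longleftrightarrow>
    exact_pow2_dvd (t + 1) (ord_frac p a b)"
  unfolding exact_pow2_dvd_iff_dvd_double prime_dvd_sum_power_iff_ord_frac[OF assms] ..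

text \<open>Induction on \<open>d = p * e\<close>: the exponents for \<open>e\<close> and for \<open>p\<close> are merged by multiplying them,
  and a final \<open>p\<close>-th power supplies the extra factor \<open>p\<close>.\<close>
lemma exists_odd_exponent_dvd_sum_power:
  fixes x y :: int and d :: nat
  assumes "odd d"
    and "\<And>p. prime p \<Longrightarrow> p dvd d \<Longrightarrow> \<exists>u. odd u \<and> int p dvd x ^ u + y ^ u"
  shows "\<exists>u. odd u \<and> int d dvd x ^ u + y ^ u"
  using assms
proof (induction d rule: less_induct)
  case (less d)
  show ?case
  proof (cases "d = 1")
    case True
    then show ?thesis
      by (intro exI[of _ 1]) simp
  next
    case False
    then obtain p where p: "prime p" "p dvd d"
      using prime_factor_nat by blast
    then obtain e where d: "d = p * e"
      by blast
    have "odd p" "odd e"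
      using less.prems(1) d by auto
    have "e < d"
      using d p(1) \<open>odd e\<close> prime_gt_1_nat by (auto simp: odd_pos)
    moreover have "\<exists>u. odd u \<and> int q dvd x ^ u + y ^ u" if "prime q" "q dvd e" for q
      using less.prems(2) that d by (simp add: dvd_mult)
    ultimately obtain u where u: "odd u" "int e dvd x ^ u + y ^ u"
      using less.IH \<open>odd e\<close> by blast
    obtain w where w: "odd w" "int p dvd x ^ w + y ^ w"
      using less.prems(2) p by blast
    define z where "z = x ^ (u * w) + y ^ (u * w)"
    have "int e dvd z"
      using u(2) dvd_sum_odd_power[OF w(1), of "x ^ u" "y ^ u"]
      unfolding z_def power_mult by (rule dvd_trans)
    then have "int d dvd z * int p"
      unfolding d by (simp add: mult.commute mult_dvd_mono)
    moreover have "int p dvd z"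
      using w(2) dvd_sum_odd_power[OF u(1), of "x ^ w" "y ^ w"]
      unfolding z_def mult.commute[of u] power_mult by (rule dvd_trans)
    then have "z * int p dvd x ^ (u * w * p) + y ^ (u * w * p)"
      using mult_dvd_sum_odd_power[OF \<open>odd p\<close>] unfolding z_def power_mult by blast
    ultimately have "int d dvd x ^ (u * w * p) + y ^ (u * w * p)"
      by (rule dvd_trans)
    moreover have "odd (u * w * p)"
      using u(1) w(1) \<open>odd p\<close> by simp
    ultimately show ?thesis
      by blast
  qed
qed

lemma exists_odd_exponent_dvd_sum_power_iff:
  fixes a b :: int and d t :: nat
  assumes "coprime a b" and "odd d"
  shows "(\<exists>u. odd u \<and> int d dvd a ^ (2 ^ t * u) + b ^ (2 ^ t * u)) \<longleftrightarrow>
    (\<forall>p. prime p \<and> p dvd d \<longrightarrow> coprime (int p) (a * b) \<and> exact_pow2_dvd (t + 1) (ord_frac p a b))"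
proof (intro iffI allI impI)
  fix p :: nat
  assume "\<exists>u. odd u \<and> int d dvd a ^ (2 ^ t * u) + b ^ (2 ^ t * u)" and p: "prime p \<and> p dvd d"
  then obtain u where u: "odd u" and p_dvd: "int p dvd a ^ (2 ^ t * u) + b ^ (2 ^ t * u)"
    by (meson dvd_trans int_dvd_int_iff)
  moreover have "odd p"
    using p assms(2) by (meson dvd_trans)
  moreover have "coprime (int p) (a * b)"
    using coprime_of_prime_dvd_sum_power[OF assms(1) _ p_dvd] p u by (simp add: odd_pos)
  ultimately show "coprime (int p) (a * b) \<and> exact_pow2_dvd (t + 1) (ord_frac p a b)"
    using prime_dvd_sum_power_iff_exact_pow2_dvd_ord_frac p by blast
next
  assume orders: "\<forall>p. prime p \<and> p dvd d \<longrightarrow> coprime (int p) (a * b) \<and> exact_pow2_dvd (t + 1) (ord_frac p a b)"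
  have "\<exists>u. odd u \<and> int p dvd (a ^ 2 ^ t) ^ u + (b ^ 2 ^ t) ^ u" if "prime p" "p dvd d" for p
  proof -
    have "odd p"
      using that assms(2) by (meson dvd_trans)
    then show ?thesis
      using orders prime_dvd_sum_power_iff_exact_pow2_dvd_ord_frac[of p a b t] that
      by (simp add: power_mult)
  qed
  from exists_odd_exponent_dvd_sum_power[OF assms(2) this]
  show "\<exists>u. odd u \<and> int d dvd a ^ (2 ^ t * u) + b ^ (2 ^ t * u)"
    by (simp add: power_mult)
qed


definition pow2_scaled_divisors :: "(nat \<Rightarrow> bool) \<Rightarrow> (nat \<Rightarrow> int) \<Rightarrow> nat \<Rightarrow> nat set" where
  "pow2_scaled_divisors P N \<beta> = {d. d > 0 \<and> (\<exists>k. P k \<and> int (2 ^ \<beta> * d) dvd N k)}"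

lemma OG_eq_pow2_scaled_divisors: "OG a b \<beta> = pow2_scaled_divisors odd (\<lambda>k. a ^ k + b ^ k) \<beta>"
  unfolding OG_def pow2_scaled_divisors_def by (auto simp: odd_pos Suc_le_eq)

lemma EG_eq_pow2_scaled_divisors:
  "EG a b \<beta> = pow2_scaled_divisors (\<lambda>k. even k \<and> k \<ge> 2) (\<lambda>k. a ^ k + b ^ k) \<beta>"
  unfolding EG_def pow2_scaled_divisors_def by auto

lemma pow2_scaled_divisors_0:
  assumes "\<And>k. P k \<Longrightarrow> even (N k)"
  shows "pow2_scaled_divisors P N 0 =
    pow2_scaled_divisors P N 1 \<union> {2 * d | d. d \<in> pow2_scaled_divisors P N 1}"
proof (intro equalityI subsetI)
  fix d
  assume "d \<in> pow2_scaled_divisors P N 0"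
  then obtain k where "d > 0" "P k" "int d dvd N k"
    unfolding pow2_scaled_divisors_def by auto
  then show "d \<in> pow2_scaled_divisors P N 1 \<union> {2 * d | d. d \<in> pow2_scaled_divisors P N 1}"
  proof (cases "even d")
    case True
    then obtain e where "d = 2 * e"
      by blast
    with \<open>d > 0\<close> \<open>P k\<close> \<open>int d dvd N k\<close> show ?thesis
      unfolding pow2_scaled_divisors_def by auto
  next
    case False
    then have "2 * int d dvd N k"
      using assms \<open>P k\<close> \<open>int d dvd N k\<close> by (simp add: divides_mult)
    with \<open>d > 0\<close> \<open>P k\<close> show ?thesis
      unfolding pow2_scaled_divisors_def by auto
  qed
qed (auto simp: pow2_scaled_divisors_def dest: dvd_mult_right)

lemma pow2_mult_odd_dvd_iff:
  fixes x :: int and d :: nat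
  assumes "odd d"
  shows "2 ^ e * int d dvd x \<longleftrightarrow> 2 ^ e dvd x \<and> int d dvd x"
proof -
  have "coprime (2 ^ e) (int d)"
    using assms by simp
  then show ?thesis
    by (blast intro: divides_mult dest: dvd_mult_left dvd_mult_right)
qed

lemma exact_pow2_dvd_pow2_dvd_iff:
  fixes x :: int
  assumes "exact_pow2_dvd \<gamma> x"
  shows "2 ^ e dvd x \<longleftrightarrow> e \<le> \<gamma>"
proof
  assume "2 ^ e dvd x"
  show "e \<le> \<gamma>"
  proof (rule ccontr)
    assume "\<not> e \<le> \<gamma>"
    then have "(2::int) ^ (\<gamma> + 1) dvd 2 ^ e"
      by (intro le_imp_power_dvd) simp
    with \<open>2 ^ e dvd x\<close> assms show False
      unfolding exact_pow2_dvd_def using dvd_trans by blast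
  qed
next
  assume "e \<le> \<gamma>"
  then have "(2::int) ^ e dvd 2 ^ \<gamma>"
    by (rule le_imp_power_dvd)
  with assms show "2 ^ e dvd x"
    unfolding exact_pow2_dvd_def using dvd_trans by blast
qed

lemma odd_mult_pow2_mem_pow2_scaled_divisors_iff:
  assumes "\<And>k. P k \<Longrightarrow> exact_pow2_dvd \<gamma> (N k)" and "odd d"
  shows "d * 2 ^ i \<in> pow2_scaled_divisors P N \<beta> \<longleftrightarrow> \<beta> + i \<le> \<gamma> \<and> (\<exists>k. P k \<and> int d dvd N k)"
proof -
  have scale: "int (2 ^ \<beta> * (d * 2 ^ i)) = 2 ^ (\<beta> + i) * int d"
    by (simp add: power_add)
  have "d * 2 ^ i > 0"
    using assms(2) by (simp add: odd_pos)
  then have "d * 2 ^ i \<in> pow2_scaled_divisors P N \<beta> \<longleftrightarrow>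
      (\<exists>k. P k \<and> 2 ^ (\<beta> + i) dvd N k \<and> int d dvd N k)"
    unfolding pow2_scaled_divisors_def mem_Collect_eq scale pow2_mult_odd_dvd_iff[OF assms(2)]
    by simp
  also have "\<dots> \<longleftrightarrow> (\<exists>k. P k \<and> \<beta> + i \<le> \<gamma> \<and> int d dvd N k)"
    using assms(1) exact_pow2_dvd_pow2_dvd_iff by blast
  finally show ?thesis
    by blast
qed

lemma pow2_scaled_divisors_exact:
  assumes "\<And>k. P k \<Longrightarrow> exact_pow2_dvd \<gamma> (N k)"
  shows "pow2_scaled_divisors P N \<gamma> = {d. odd d \<and> (\<exists>k. P k \<and> int d dvd N k)}"
proof (intro equalityI subsetI)
  fix d
  assume d: "d \<in> pow2_scaled_divisors P N \<gamma>"
  then have "d > 0"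
    by (simp add: pow2_scaled_divisors_def)
  then obtain i e where "odd e" and de: "d = e * 2 ^ i"
    using prime_power_canonical[OF two_is_prime_nat] by blast
  then show "d \<in> {d. odd d \<and> (\<exists>k. P k \<and> int d dvd N k)}"
    using d odd_mult_pow2_mem_pow2_scaled_divisors_iff[OF assms] by auto
qed (use odd_mult_pow2_mem_pow2_scaled_divisors_iff[OF assms, where i = 0] in auto)

lemma pow2_scaled_divisors_1:
  assumes "\<And>k. P k \<Longrightarrow> exact_pow2_dvd \<gamma> (N k)"
  shows "pow2_scaled_divisors P N 1 = {d * 2 ^ i | d i. d \<in> pow2_scaled_divisors P N \<gamma> \<and> i < \<gamma>}"
proof (intro equalityI subsetI)
  fix d
  assume d: "d \<in> pow2_scaled_divisors P N 1"
  then have "d > 0"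
    by (simp add: pow2_scaled_divisors_def)
  then obtain i e where "odd e" and de: "d = e * 2 ^ i"
    using prime_power_canonical[OF two_is_prime_nat] by blast
  then have "1 + i \<le> \<gamma> \<and> (\<exists>k. P k \<and> int e dvd N k)"
    using d odd_mult_pow2_mem_pow2_scaled_divisors_iff[where i = i and \<beta> = 1, OF assms \<open>odd e\<close>]
    by simp
  then have "i < \<gamma>" and "e \<in> pow2_scaled_divisors P N \<gamma>"
    using \<open>odd e\<close> pow2_scaled_divisors_exact[OF assms] by auto
  with de show "d \<in> {d * 2 ^ i | d i. d \<in> pow2_scaled_divisors P N \<gamma> \<and> i < \<gamma>}"
    by blast
qed (auto simp: pow2_scaled_divisors_exact[OF assms] odd_mult_pow2_mem_pow2_scaled_divisors_iff[OF assms])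


lemma OG_exact_eq:
  fixes a b :: int
  assumes "coprime a b" and "odd a" and "odd b" and "exact_pow2_dvd \<gamma> (a + b)"
  shows "OG a b \<gamma> = {d. d = 1 \<or> (odd d \<and> (\<forall>p. prime p \<and> p dvd d \<longrightarrow>
    coprime (int p) (a * b) \<and> exact_pow2_dvd 1 (ord_frac p a b)))}"
proof -
  have "OG a b \<gamma> = {d. odd d \<and> (\<exists>k. odd k \<and> int d dvd a ^ k + b ^ k)}"
    unfolding OG_eq_pow2_scaled_divisors
    using exact_pow2_dvd_sum_odd_power[OF assms(2,3) _ assms(4)] by (rule pow2_scaled_divisors_exact)
  also have "\<dots> = {d. odd d \<and> (\<forall>p. prime p \<and> p dvd d \<longrightarrow>
      coprime (int p) (a * b) \<and> exact_pow2_dvd 1 (ord_frac p a b))}"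
  proof (intro Collect_cong conj_cong refl)
    fix d :: nat
    assume "odd d"
    from exists_odd_exponent_dvd_sum_power_iff[OF assms(1) this, where t = 0]
    show "(\<exists>k. odd k \<and> int d dvd a ^ k + b ^ k) \<longleftrightarrow> (\<forall>p. prime p \<and> p dvd d \<longrightarrow>
        coprime (int p) (a * b) \<and> exact_pow2_dvd 1 (ord_frac p a b))"
      by simp
  qed
  also have "\<dots> = {d. d = 1 \<or> (odd d \<and> (\<forall>p. prime p \<and> p dvd d \<longrightarrow>
      coprime (int p) (a * b) \<and> exact_pow2_dvd 1 (ord_frac p a b)))}"
    by fastforce
  finally show ?thesis .
qed

lemma even_ge_2_iff_pow2_mult_odd:
  fixes k :: nat
  shows "even k \<and> k \<ge> 2 \<longleftrightarrow> (\<exists>t u. t \<ge> 1 \<and> odd u \<and> k = 2 ^ t * u)"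
proof
  assume k: "even k \<and> k \<ge> 2"
  then obtain t u where "odd u" and "k = u * 2 ^ t"
    using prime_power_canonical[OF two_is_prime_nat, of k] by auto
  moreover from this k have "t \<ge> 1"
    by (cases t) auto
  ultimately show "\<exists>t u. t \<ge> 1 \<and> odd u \<and> k = 2 ^ t * u"
    by (auto simp: mult.commute)
next
  assume "\<exists>t u. t \<ge> 1 \<and> odd u \<and> k = 2 ^ t * u"
  then obtain t u where "t \<ge> 1" "odd u" "k = 2 ^ t * u"
    by blast
  moreover have "2 ^ 1 * 1 \<le> 2 ^ t * u"
    using calculation by (intro mult_le_mono power_increasing) (auto simp: odd_pos Suc_le_eq)
  ultimately show "even k \<and> k \<ge> 2"
    by simp
qed

lemma EG_1_eq:
  fixes a b :: int
  assumes "coprime a b" and "odd a" and "odd b"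
  shows "EG a b 1 = {d. d = 1 \<or> (odd d \<and> (\<exists>s\<ge>2. \<forall>p. prime p \<and> p dvd d \<longrightarrow>
    coprime (int p) (a * b) \<and> exact_pow2_dvd s (ord_frac p a b)))}"
proof -
  have "EG a b 1 = {d. odd d \<and> (\<exists>k. (even k \<and> k \<ge> 2) \<and> int d dvd a ^ k + b ^ k)}"
    unfolding EG_eq_pow2_scaled_divisors
    using exact_pow2_dvd_sum_even_power[OF assms(2,3)] by (intro pow2_scaled_divisors_exact) blast
  also have "\<dots> = {d. odd d \<and> (\<exists>s\<ge>2. \<forall>p. prime p \<and> p dvd d \<longrightarrow>
      coprime (int p) (a * b) \<and> exact_pow2_dvd s (ord_frac p a b))}"
  proof (intro Collect_cong conj_cong refl)
    have shift: "(\<exists>t\<ge>1. Q (t + 1)) \<longleftrightarrow> (\<exists>s\<ge>2. Q s)" for Q :: "nat \<Rightarrow> bool"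
    proof
      assume "\<exists>t\<ge>1. Q (t + 1)"
      then obtain t where "t \<ge> 1" "Q (t + 1)"
        by blast
      then show "\<exists>s\<ge>2. Q s"
        by (intro exI[of _ "t + 1"]) simp
    next
      assume "\<exists>s\<ge>2. Q s"
      then obtain s where "s \<ge> 2" "Q s"
        by blast
      then show "\<exists>t\<ge>1. Q (t + 1)"
        by (intro exI[of _ "s - 1"]) simp
    qed
    fix d :: nat
    assume "odd d"
    have "(\<exists>k. (even k \<and> k \<ge> 2) \<and> int d dvd a ^ k + b ^ k) \<longleftrightarrow>
        (\<exists>t\<ge>1. \<exists>u. odd u \<and> int d dvd a ^ (2 ^ t * u) + b ^ (2 ^ t * u))"
      unfolding even_ge_2_iff_pow2_mult_odd by blast
    also have "\<dots> \<longleftrightarrow> (\<exists>t\<ge>1. \<forall>p. prime p \<and> p dvd d \<longrightarrow>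
        coprime (int p) (a * b) \<and> exact_pow2_dvd (t + 1) (ord_frac p a b))"
      using exists_odd_exponent_dvd_sum_power_iff[OF assms(1) \<open>odd d\<close>] by simp
    also have "\<dots> \<longleftrightarrow> (\<exists>s\<ge>2. \<forall>p. prime p \<and> p dvd d \<longrightarrow>
        coprime (int p) (a * b) \<and> exact_pow2_dvd s (ord_frac p a b))"
      by (rule shift)
    finally show "(\<exists>k. (even k \<and> k \<ge> 2) \<and> int d dvd a ^ k + b ^ k) \<longleftrightarrow> \<dots>" .
  qed
  also have "\<dots> = {d. d = 1 \<or> (odd d \<and> (\<exists>s\<ge>2. \<forall>p. prime p \<and> p dvd d \<longrightarrow>
      coprime (int p) (a * b) \<and> exact_pow2_dvd s (ord_frac p a b)))}"
  proof -
    have "\<exists>s\<ge>2. \<forall>p. prime p \<and> p dvd (1::nat) \<longrightarrow>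
        coprime (int p) (a * b) \<and> exact_pow2_dvd s (ord_frac p a b)"
      by (intro exI[of _ 2]) simp
    then show ?thesis
      by auto
  qed
  finally show ?thesis .
qed

theorem theorem2p21:
  fixes a b :: int and \<gamma> :: nat
  assumes "coprime a b" and "odd a" and "odd b"
    and "\<gamma> > 0" and "exact_pow2_dvd \<gamma> (a + b)"
  shows
    "(\<gamma> \<ge> 2 \<longrightarrow>
        OG a b 1 = {d * 2 ^ i | d i. d \<in> OG a b \<gamma> \<and> i < \<gamma>} \<and>
        OG a b \<gamma> = {d. d = 1 \<or> (odd d \<and> (\<forall>p. prime p \<and> p dvd d \<longrightarrow>
              coprime (int p) (a * b) \<and> exact_pow2_dvd 1 (ord_frac p a b)))})
     \<and> EG a b 1 = {d. d = 1 \<or> (odd d \<and> (\<exists>s\<ge>2. \<forall>p. prime p \<and> p dvd d \<longrightarrow>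
              coprime (int p) (a * b) \<and> exact_pow2_dvd s (ord_frac p a b)))}
     \<and> OG a b 0 = OG a b 1 \<union> {2 * d | d. d \<in> OG a b 1}
     \<and> EG a b 0 = EG a b 1 \<union> {2 * d | d. d \<in> EG a b 1}"
proof -
  have sum_even: "even (a ^ k + b ^ k)" for k
    using assms(2,3) by simp
  have "OG a b 1 = {d * 2 ^ i | d i. d \<in> OG a b \<gamma> \<and> i < \<gamma>}"
    unfolding OG_eq_pow2_scaled_divisors
    using exact_pow2_dvd_sum_odd_power[OF assms(2,3) _ assms(5)] by (rule pow2_scaled_divisors_1)
  moreover have "OG a b 0 = OG a b 1 \<union> {2 * d | d. d \<in> OG a b 1}"
    unfolding OG_eq_pow2_scaled_divisors using sum_even by (rule pow2_scaled_divisors_0)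
  moreover have "EG a b 0 = EG a b 1 \<union> {2 * d | d. d \<in> EG a b 1}"
    unfolding EG_eq_pow2_scaled_divisors using sum_even by (rule pow2_scaled_divisors_0)
  ultimately show ?thesis
    using OG_exact_eq[OF assms(1-3,5)] EG_1_eq[OF assms(1-3)] by (intro conjI impI) assumption+
qed

end
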